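(* (a) The density $f_{W_Y}$ of $W_Y$ is continuously differentiable on $\mathbb R$, and $f_{W_Y}$, $f_{W_Y}'$, $f_{W_Y}''$ are bounded; hence $f_{W_Y}$ and $f_{W_Y}'$ are uniformly continuous. (c) Let $n\ge0$, let $a_1,\dots,a_n\ge0$, and for $w\in\mathbb R$ let $c_n(w)=\{|w+\Sigma_1|\ge a_1,\dots,|w+\Sigma_n|\ge a_n\}$ ($c_0(w)$ the whole space), where $\Sigma_k=W_{Y_1}+\dots+W_{Y_k}$. Define $f^{(n)}_w(x)=\frac{d}{dx}P\big(\{w+\Sigma_{n+1}\le x\}\cap c_n(w)\big)$. Then for all $w\ge0$ and $x\ge0$, $f^{(n)}_w(x)\ge f^{(n)}_w(-x)$; moreover, for fixed $x$, $w\mapsto f^{(n)}_w(x)$ is differentiable with derivative continuous and bounded in $w$.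
   Context: $(W_t)$ is a standard Wiener process. $Y$ is a random variable with $Y\ge\epsilon$ a.s. for some $\epsilon>0$ and $\mathbb E[Y]<\infty$; $W_Y$ is a centered normal variable with independent random variance $Y$ (Wiener process at an independent time $Y$). $Y_1,Y_2,\dots$ are i.i.d. copies of $Y$, and $W_{Y_1},W_{Y_2},\dots$ are independent random variables, each distributed as $W_Y$ (the Wiener increments over consecutive independent time lengths $Y_1,Y_2,\dots$). *)

theory Defs
  imports "HOL-Probability.Probability"
begin

(* Wiener increment over an independent random time length Y k:
   W_{Y_k} = sqrt(Y_k) * Z_k with Z_k standard normal independent of Y_k. *)
definition WY :: "(nat \<Rightarrow> 'a \<Rightarrow> real) \<Rightarrow> (nat \<Rightarrow> 'a \<Rightarrow> real) \<Rightarrow> nat \<Rightarrow> 'a \<Rightarrow> real" where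
  "WY Y Z k \<omega> = sqrt (Y k \<omega>) * Z k \<omega>"

definition Sigma_sum :: "(nat \<Rightarrow> 'a \<Rightarrow> real) \<Rightarrow> nat \<Rightarrow> 'a \<Rightarrow> real" where
  "Sigma_sum W k \<omega> = (\<Sum>i\<in>{1..k}. W i \<omega>)"

definition Fcdf :: "'a measure \<Rightarrow> (nat \<Rightarrow> 'a \<Rightarrow> real) \<Rightarrow> nat \<Rightarrow> (nat \<Rightarrow> real) \<Rightarrow> real \<Rightarrow> real \<Rightarrow> real" where
  "Fcdf M W n a w x = measure M {\<omega> \<in> space M. w + Sigma_sum W (Suc n) \<omega> \<le> x \<and>
        (\<forall>k\<in>{1..n}. \<bar>w + Sigma_sum W k \<omega>\<bar> \<ge> a k)}"

end

(*
  Conditionally on Y = y, the increment W_Y is centred normal with standard deviation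
  sqrt y \<ge> sqrt \<epsilon>.  Its density is therefore a mixture, over the law of Y, of Gaussian
  densities whose values and first two derivatives are bounded uniformly in y, and
  differentiation under the integral sign gives (a).

  For (c), independence of the increments turns P({w + \<Sigma>_{n+1} \<le> x} \<inter> c_n(w)) into an
  n-fold iterated integral against the law of W_Y of a walk killed when |w + \<Sigma>_k| < a_k,
  and its x-derivative is the same iteration with the density in place of the
  distribution function.  The inequality f_w(x) \<ge> f_w(-x) follows by induction on n from
  the reflection symmetry f_{-w}(-x) = f_w(x) and the fact that a centred Gaussian
  density is larger at u - w than at u + w when u, w \<ge> 0.  Smoothness in w comes from
  writing the first step as a Gaussian mixture convolved with a bounded function.
*)

theory Submission
  imports Defs
begin

section \<open>Differentiation under the integral sign\<close>

lemma tendsto_integral_dominated_at: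
  fixes s :: "real \<Rightarrow> 'b \<Rightarrow> real"
  assumes f: "f \<in> borel_measurable N" and s: "\<And>t. s t \<in> borel_measurable N"
    and e: "integrable N e"
    and lim: "AE u in N. ((\<lambda>t. s t u) \<longlongrightarrow> f u) (at x)"
    and bound: "\<forall>\<^sub>F t in at x. AE u in N. norm (s t u) \<le> e u"
  shows "((\<lambda>t. \<integral>u. s t u \<partial>N) \<longlongrightarrow> (\<integral>u. f u \<partial>N)) (at x)"
proof (subst tendsto_at_iff_sequentially, intro allI impI)
  fix X :: "nat \<Rightarrow> real" assume "\<forall>i. X i \<in> UNIV - {x}" and "X \<longlonglongrightarrow> x"
  then have X: "filterlim X (at x) sequentially"
    by (intro filterlim_atI) auto
  from filterlim_iff[THEN iffD1, OF X, rule_format, OF bound]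
  obtain N0 where dom: "\<And>n. N0 \<le> n \<Longrightarrow> AE u in N. norm (s (X n) u) \<le> e u"
    by (auto simp: eventually_sequentially)
  show "((\<lambda>t. \<integral>u. s t u \<partial>N) \<circ> X) \<longlonglongrightarrow> (\<integral>u. f u \<partial>N)"
    unfolding comp_def
  proof (rule LIMSEQ_offset, rule integral_dominated_convergence)
    show "AE u in N. norm (s (X (n + N0)) u) \<le> e u" for n
      by (rule dom) simp
    show "AE u in N. (\<lambda>n. s (X (n + N0)) u) \<longlonglongrightarrow> f u"
      using lim
    proof eventually_elim
      fix u assume "((\<lambda>t. s t u) \<longlongrightarrow> f u) (at x)"
      then show "(\<lambda>n. s (X (n + N0)) u) \<longlonglongrightarrow> f u"
        by (intro LIMSEQ_ignore_initial_segment filterlim_compose[OF _ X])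
    qed
  qed (use f s e in auto)
qed

lemma lipschitz_on_real_derivative_bound:
  fixes f :: "real \<Rightarrow> real"
  assumes "convex X" and "0 \<le> C"
    and "\<And>x. x \<in> X \<Longrightarrow> (f has_real_derivative f' x) (at x within X)"
    and "\<And>x. x \<in> X \<Longrightarrow> \<bar>f' x\<bar> \<le> C"
  shows "C-lipschitz_on X f"
proof (rule bounded_derivative_imp_lipschitz)
  show "(f has_derivative (\<lambda>h. f' x *\<^sub>R h)) (at x within X)" if "x \<in> X" for x
    using assms(3)[OF that] by (simp add: has_field_derivative_def)
  show "onorm (\<lambda>h::real. f' x *\<^sub>R h) \<le> C" if "x \<in> X" for x
    using assms(4)[OF that] onorm_scaleR[where f="\<lambda>h::real. h" and r="f' x"] onorm_id[where 'a=real]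
    by simp
qed fact+

lemma abs_difference_quotient_le:
  fixes g g' :: "real \<Rightarrow> real"
  assumes h: "\<bar>h\<bar> < r"
    and der: "\<And>t. \<bar>t - w\<bar> < r \<Longrightarrow> (g has_real_derivative g' t) (at t)"
    and bd: "\<And>t. \<bar>t - w\<bar> < r \<Longrightarrow> \<bar>g' t\<bar> \<le> B"
  shows "\<bar>(g (w + h) - g w) / h\<bar> \<le> B"
proof -
  have "0 < r"
    using h abs_ge_zero[of h] by linarith
  then have B: "0 \<le> B"
    using bd[of w] by fastforce
  have "B-lipschitz_on (ball w r) g"
  proof (rule lipschitz_on_real_derivative_bound[OF convex_ball B])
    fix t assume "t \<in> ball w r"
    then have t: "\<bar>t - w\<bar> < r"
      by (simp add: dist_real_def abs_minus_commute)
    show "(g has_real_derivative g' t) (at t within ball w r)"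
      by (rule has_field_derivative_at_within[OF der[OF t]])
    show "\<bar>g' t\<bar> \<le> B"
      by (rule bd[OF t])
  qed
  then have "dist (g (w + h)) (g w) \<le> B * dist (w + h) w"
    using h by (intro lipschitz_onD) (auto simp: dist_real_def)
  then show ?thesis
    using B by (cases "h = 0") (simp_all add: dist_real_def abs_divide divide_le_eq)
qed

lemma has_real_derivative_integral:
  fixes k k' :: "'b \<Rightarrow> real \<Rightarrow> real"
  assumes r: "r > 0"
    and int: "\<And>t. \<bar>t - w\<bar> < r \<Longrightarrow> integrable N (\<lambda>u. k u t)"
    and der: "\<And>u t. u \<in> space N \<Longrightarrow> \<bar>t - w\<bar> < r \<Longrightarrow> (k u has_real_derivative k' u t) (at t)"
    and bd: "\<And>u t. u \<in> space N \<Longrightarrow> \<bar>t - w\<bar> < r \<Longrightarrow> \<bar>k' u t\<bar> \<le> e u"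
    and e: "integrable N e"
    and k': "(\<lambda>u. k' u w) \<in> borel_measurable N"
  shows "((\<lambda>t. \<integral>u. k u t \<partial>N) has_real_derivative (\<integral>u. k' u w \<partial>N)) (at w)"
proof -
  define s where "s h u = (if \<bar>h\<bar> < r then (k u (w + h) - k u w) / h else 0)" for h u
  have near: "\<forall>\<^sub>F h in at 0. \<bar>h\<bar> < r"
    using eventually_at_ball[OF r, of 0 UNIV] by eventually_elim (simp add: dist_norm)
  have s_measurable: "s h \<in> borel_measurable N" for h
    using int[of "w + h"] int[of w] r unfolding s_def[abs_def]
    by (cases "\<bar>h\<bar> < r") (auto intro!: borel_measurable_divide borel_measurable_diff)
  have lim: "AE u in N. ((\<lambda>h. s h u) \<longlongrightarrow> k' u w) (at 0)"
  proof (rule AE_I2)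
    fix u assume u: "u \<in> space N"
    have "((\<lambda>h. (k u (w + h) - k u w) / h) \<longlongrightarrow> k' u w) (at 0)"
      using der[OF u, of w] r by (simp add: DERIV_def)
    then show "((\<lambda>h. s h u) \<longlongrightarrow> k' u w) (at 0)"
      by (rule Lim_transform_eventually) (use near in \<open>eventually_elim, simp add: s_def\<close>)
  qed
  have bound: "\<forall>\<^sub>F h in at 0. AE u in N. norm (s h u) \<le> e u"
    using near
  proof eventually_elim
    case (elim h)
    show ?case
    proof (rule AE_I2)
      fix u assume u: "u \<in> space N"
      show "norm (s h u) \<le> e u"
        using abs_difference_quotient_le[OF elim der[OF u] bd[OF u]] elim by (simp add: s_def)
    qed
  qed
  have "((\<lambda>h. \<integral>u. s h u \<partial>N) \<longlongrightarrow> (\<integral>u. k' u w \<partial>N)) (at 0)"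
    by (rule tendsto_integral_dominated_at[OF k' s_measurable e lim bound])
  moreover have "\<forall>\<^sub>F h in at 0. (\<integral>u. s h u \<partial>N) = ((\<integral>u. k u (w + h) \<partial>N) - (\<integral>u. k u w \<partial>N)) / h"
    using near by eventually_elim (use int[of "w + _"] int[of w] r in \<open>simp add: s_def\<close>)
  ultimately show ?thesis
    unfolding DERIV_def by (rule Lim_transform_eventually)
qed

lemma isCont_integral:
  fixes k :: "'b \<Rightarrow> real \<Rightarrow> real"
  assumes r: "r > 0"
    and m: "\<And>t. (\<lambda>u. k u t) \<in> borel_measurable N"
    and c: "\<And>u. u \<in> space N \<Longrightarrow> isCont (k u) w"
    and bd: "\<And>u t. u \<in> space N \<Longrightarrow> \<bar>t - w\<bar> < r \<Longrightarrow> \<bar>k u t\<bar> \<le> e u"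
    and e: "integrable N e"
  shows "isCont (\<lambda>t. \<integral>u. k u t \<partial>N) w"
  unfolding isCont_def
proof (rule tendsto_integral_dominated_at[OF m m e])
  show "AE u in N. ((\<lambda>t. k u t) \<longlongrightarrow> k u w) (at w)"
    using c by (auto simp: isCont_def)
  show "\<forall>\<^sub>F t in at w. AE u in N. norm (k u t) \<le> e u"
    using eventually_at_ball[OF r, of w UNIV]
    by eventually_elim (auto simp: dist_norm intro!: bd abs_minus_commute)
qed

lemma (in prob_space) abs_integral_le_const:
  fixes g :: "'a \<Rightarrow> real"
  assumes "g \<in> borel_measurable M" and "\<And>x. \<bar>g x\<bar> \<le> C"
  shows "\<bar>\<integral>x. g x \<partial>M\<bar> \<le> C"
proof -
  have "\<bar>\<integral>x. g x \<partial>M\<bar> \<le> (\<integral>x. \<bar>g x\<bar> \<partial>M)"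
    by (rule integral_abs_bound)
  also have "\<dots> \<le> C"
    using assms by (intro integral_le_const integrable_const_bound[where B=C]) auto
  finally show ?thesis .
qed

section \<open>Centred Gaussian densities\<close>

definition gauss :: "real \<Rightarrow> real \<Rightarrow> real" where
  "gauss \<sigma> x = normal_density 0 \<sigma> x"

definition gauss' :: "real \<Rightarrow> real \<Rightarrow> real" where
  "gauss' \<sigma> x = - x / \<sigma>\<^sup>2 * gauss \<sigma> x"

definition gauss'' :: "real \<Rightarrow> real \<Rightarrow> real" where
  "gauss'' \<sigma> x = (x\<^sup>2 / \<sigma>^4 - 1 / \<sigma>\<^sup>2) * gauss \<sigma> x"

lemma gauss_eq: "gauss \<sigma> x = exp (- x\<^sup>2 / (2 * \<sigma>\<^sup>2)) / sqrt (2 * pi * \<sigma>\<^sup>2)"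
  by (simp add: gauss_def normal_density_def)

lemma gauss_nonneg [simp]: "0 \<le> gauss \<sigma> x"
  by (simp add: gauss_def)

lemma gauss_minus: "gauss \<sigma> (- x) = gauss \<sigma> x"
  by (simp add: gauss_eq)

lemma gauss_antimono:
  assumes "\<bar>s\<bar> \<le> \<bar>t\<bar>"
  shows "gauss \<sigma> t \<le> gauss \<sigma> s"
proof -
  have "s\<^sup>2 \<le> t\<^sup>2"
    using assms by (metis abs_le_square_iff)
  then have "- t\<^sup>2 / (2 * \<sigma>\<^sup>2) \<le> - s\<^sup>2 / (2 * \<sigma>\<^sup>2)"
    by (intro divide_right_mono) auto
  then show ?thesis
    unfolding gauss_eq by (intro divide_right_mono) auto
qed

lemma gauss_scale:
  assumes "\<sigma> > 0"
  shows "\<sigma> * gauss \<sigma> (\<sigma> * z) = std_normal_density z"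
proof -
  have "- (\<sigma> * z)\<^sup>2 / (2 * \<sigma>\<^sup>2) = - z\<^sup>2 / 2" and "sqrt (2 * pi * \<sigma>\<^sup>2) = sqrt (2 * pi) * \<sigma>"
    using assms by (simp_all add: power_mult_distrib real_sqrt_mult)
  then show ?thesis
    using assms unfolding gauss_eq std_normal_density_def by simp
qed

lemma has_real_derivative_gauss:
  "\<sigma> > 0 \<Longrightarrow> (gauss \<sigma> has_real_derivative gauss' \<sigma> x) (at x)"
  unfolding gauss_eq[abs_def] gauss'_def gauss_eq
  by (auto intro!: derivative_eq_intros simp: field_simps power2_eq_square)

lemma has_real_derivative_gauss':
  assumes "\<sigma> > 0"
  shows "(gauss' \<sigma> has_real_derivative gauss'' \<sigma> x) (at x)"
proof -
  have "((\<lambda>x. - x / \<sigma>\<^sup>2) has_real_derivative - 1 / \<sigma>\<^sup>2) (at x)"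
    using DERIV_cdivide[OF DERIV_minus[OF DERIV_ident], of "\<sigma>\<^sup>2"] by simp
  from DERIV_mult[OF this has_real_derivative_gauss[OF assms]]
  have "((\<lambda>x. - x / \<sigma>\<^sup>2 * gauss \<sigma> x) has_real_derivative
          - 1 / \<sigma>\<^sup>2 * gauss \<sigma> x + gauss' \<sigma> x * (- x / \<sigma>\<^sup>2)) (at x)" .
  also have "- 1 / \<sigma>\<^sup>2 * gauss \<sigma> x + gauss' \<sigma> x * (- x / \<sigma>\<^sup>2) = gauss'' \<sigma> x"
    using assms by (simp add: gauss'_def gauss''_def power2_eq_square power4_eq_xxxx divide_simps)
      (simp add: algebra_simps)
  finally show ?thesis
    by (simp add: gauss'_def[abs_def])
qed

lemma isCont_gauss': "\<sigma> > 0 \<Longrightarrow> isCont (gauss' \<sigma>) x"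
  using has_real_derivative_gauss' DERIV_isCont by blast

lemma measurable_gauss [measurable (raw)]:
  assumes [measurable]: "g \<in> borel_measurable N" "h \<in> borel_measurable N"
  shows "(\<lambda>x. gauss (g x) (h x)) \<in> borel_measurable N"
  unfolding gauss_eq by measurable

lemma measurable_gauss' [measurable (raw)]:
  assumes [measurable]: "g \<in> borel_measurable N" "h \<in> borel_measurable N"
  shows "(\<lambda>x. gauss' (g x) (h x)) \<in> borel_measurable N"
  unfolding gauss'_def by measurable

lemma measurable_gauss'' [measurable (raw)]:
  assumes [measurable]: "g \<in> borel_measurable N" "h \<in> borel_measurable N"
  shows "(\<lambda>x. gauss'' (g x) (h x)) \<in> borel_measurable N"
  unfolding gauss''_def by measurable

lemma abs_mult_exp_neg_square_le:
  fixes x \<sigma> :: real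
  assumes "\<sigma> > 0"
  shows "\<bar>x\<bar> * exp (- x\<^sup>2 / (2 * \<sigma>\<^sup>2)) \<le> \<sigma>"
proof -
  have "2 * (\<bar>x\<bar> / \<sigma>) \<le> 1 + (\<bar>x\<bar> / \<sigma>)\<^sup>2"
    using zero_le_power2[of "\<bar>x\<bar> / \<sigma> - 1"] by (simp add: power2_eq_square algebra_simps)
  then have "\<bar>x\<bar> / \<sigma> \<le> 1 + x\<^sup>2 / (2 * \<sigma>\<^sup>2)"
    by (simp add: power_divide)
  also have "\<dots> \<le> exp (x\<^sup>2 / (2 * \<sigma>\<^sup>2))"
    by (rule exp_ge_add_one_self)
  finally show ?thesis
    using assms by (simp add: exp_minus field_simps)
qed

lemma square_mult_exp_neg_square_le:
  fixes x \<sigma> :: real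
  assumes "\<sigma> > 0"
  shows "x\<^sup>2 * exp (- x\<^sup>2 / (2 * \<sigma>\<^sup>2)) \<le> 2 * \<sigma>\<^sup>2"
proof -
  have "x\<^sup>2 / (2 * \<sigma>\<^sup>2) \<le> exp (x\<^sup>2 / (2 * \<sigma>\<^sup>2))"
    using exp_ge_add_one_self[of "x\<^sup>2 / (2 * \<sigma>\<^sup>2)"] by linarith
  then show ?thesis
    using assms by (simp add: exp_minus field_simps)
qed

lemma le_sqrt_2pi_square: "\<sigma> > 0 \<Longrightarrow> \<sigma> \<le> sqrt (2 * pi * \<sigma>\<^sup>2)"
  using real_sqrt_le_mono[of "\<sigma>\<^sup>2" "2 * pi * \<sigma>\<^sup>2"] pi_gt3 by simp

lemma gauss_le:
  assumes "0 < \<sigma>\<^sub>0" "\<sigma>\<^sub>0 \<le> \<sigma>"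
  shows "gauss \<sigma> x \<le> 1 / \<sigma>\<^sub>0"
proof -
  have "gauss \<sigma> x \<le> 1 / sqrt (2 * pi * \<sigma>\<^sup>2)"
    unfolding gauss_eq by (intro divide_right_mono) auto
  also have "\<dots> \<le> 1 / \<sigma>\<^sub>0"
    using le_sqrt_2pi_square[of \<sigma>] assms by (intro divide_left_mono) auto
  finally show ?thesis .
qed

lemma abs_gauss'_le:
  assumes "0 < \<sigma>\<^sub>0" "\<sigma>\<^sub>0 \<le> \<sigma>"
  shows "\<bar>gauss' \<sigma> x\<bar> \<le> 1 / \<sigma>\<^sub>0\<^sup>2"
proof -
  have \<sigma>: "\<sigma> > 0"
    using assms by simp
  have "\<bar>gauss' \<sigma> x\<bar> = \<bar>x\<bar> * exp (- x\<^sup>2 / (2 * \<sigma>\<^sup>2)) / (\<sigma>\<^sup>2 * sqrt (2 * pi * \<sigma>\<^sup>2))"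
    by (simp add: gauss'_def gauss_eq abs_mult abs_divide)
  also have "\<dots> \<le> \<sigma> / (\<sigma>\<^sup>2 * \<sigma>)"
    using abs_mult_exp_neg_square_le[OF \<sigma>, of x] le_sqrt_2pi_square[OF \<sigma>] \<sigma>
    by (intro frac_le mult_left_mono) auto
  also have "\<dots> = 1 / \<sigma>\<^sup>2"
    using \<sigma> by (simp add: power2_eq_square)
  also have "\<dots> \<le> 1 / \<sigma>\<^sub>0\<^sup>2"
    using assms by (intro divide_left_mono power_mono) auto
  finally show ?thesis .
qed

lemma abs_gauss''_le:
  assumes "0 < \<sigma>\<^sub>0" "\<sigma>\<^sub>0 \<le> \<sigma>"
  shows "\<bar>gauss'' \<sigma> x\<bar> \<le> 3 / \<sigma>\<^sub>0 ^ 3"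
proof -
  have \<sigma>: "\<sigma> > 0"
    using assms by simp
  have "\<bar>gauss'' \<sigma> x\<bar> \<le> (x\<^sup>2 / \<sigma>^4 + 1 / \<sigma>\<^sup>2) * gauss \<sigma> x"
    unfolding gauss''_def abs_mult abs_of_nonneg[OF gauss_nonneg]
    using \<sigma> abs_triangle_ineq4[of "x\<^sup>2 / \<sigma>^4" "1 / \<sigma>\<^sup>2"] by (intro mult_right_mono) auto
  also have "\<dots> = (x\<^sup>2 * exp (- x\<^sup>2 / (2 * \<sigma>\<^sup>2)) / \<sigma>^4 + exp (- x\<^sup>2 / (2 * \<sigma>\<^sup>2)) / \<sigma>\<^sup>2)
                  / sqrt (2 * pi * \<sigma>\<^sup>2)"
    by (simp add: gauss_eq field_simps)
  also have "\<dots> \<le> (2 * \<sigma>\<^sup>2 / \<sigma>^4 + 1 / \<sigma>\<^sup>2) / \<sigma>"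
    using square_mult_exp_neg_square_le[OF \<sigma>, of x] le_sqrt_2pi_square[OF \<sigma>] \<sigma>
    by (intro frac_le add_mono divide_right_mono) auto
  also have "\<dots> = 3 / \<sigma>^3"
    using \<sigma> by (simp add: field_simps power2_eq_square power4_eq_xxxx power3_eq_cube)
  also have "\<dots> \<le> 3 / \<sigma>\<^sub>0^3"
    using assms by (intro divide_left_mono power_mono) auto
  finally show ?thesis .
qed

lemma integrable_gauss: "\<sigma> > 0 \<Longrightarrow> integrable lborel (gauss \<sigma>)"
  unfolding gauss_def[abs_def] by simp

lemma integral_gauss: "\<sigma> > 0 \<Longrightarrow> (\<integral>x. gauss \<sigma> x \<partial>lborel) = 1"
  unfolding gauss_def[abs_def] by simp

lemma
  assumes "\<sigma> > 0"
  shows integrable_gauss_abs_moment: "integrable lborel (\<lambda>x. gauss \<sigma> x * \<bar>x\<bar>)"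
    and integral_gauss_abs_moment: "(\<integral>x. gauss \<sigma> x * \<bar>x\<bar> \<partial>lborel) = \<sigma> * sqrt (2 / pi)"
  using normal_moment_abs_odd[OF assms, of 0 0] unfolding gauss_def[abs_def]
  by (auto simp: has_bochner_integral_iff)

lemma abs_gauss'_eq: "\<bar>gauss' \<sigma> x\<bar> = gauss \<sigma> x * \<bar>x\<bar> / \<sigma>\<^sup>2"
  by (simp add: gauss'_def abs_mult abs_divide)

lemma integrable_abs_gauss': "\<sigma> > 0 \<Longrightarrow> integrable lborel (\<lambda>x. \<bar>gauss' \<sigma> x\<bar>)"
  unfolding abs_gauss'_eq using integrable_gauss_abs_moment by simp

lemma integral_abs_gauss'_le:
  assumes "\<sigma> > 0"
  shows "(\<integral>x. \<bar>gauss' \<sigma> x\<bar> \<partial>lborel) \<le> 1 / \<sigma>"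
proof -
  have "sqrt (2 / pi) \<le> 1"
    using pi_gt3 by (simp add: divide_le_eq)
  then have "\<sigma> * sqrt (2 / pi) / \<sigma>\<^sup>2 \<le> \<sigma> / \<sigma>\<^sup>2"
    using assms by (intro divide_right_mono mult_left_le) auto
  then show ?thesis
    unfolding abs_gauss'_eq using integral_gauss_abs_moment[OF assms] assms
    by (simp add: power2_eq_square)
qed

text \<open>An integrable majorant of \<open>t \<mapsto> \<bar>gauss' \<sigma> t\<bar>\<close> on the unit interval around \<open>x\<close>; it rests on
  \<open>x\<^sup>2 \<le> 2 t\<^sup>2 + 2\<close> for \<open>\<bar>t - x\<bar> \<le> 1\<close>.\<close>

definition gauss'_envelope :: "real \<Rightarrow> real \<Rightarrow> real" where
  "gauss'_envelope \<sigma> x = exp (1 / (2 * \<sigma>\<^sup>2)) * sqrt 2 / \<sigma>\<^sup>2 * ((\<bar>x\<bar> + 1) * gauss (sqrt 2 * \<sigma>) x)"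

lemma gauss'_envelope_nonneg: "0 \<le> gauss'_envelope \<sigma> x"
  by (simp add: gauss'_envelope_def)

lemma integrable_gauss'_envelope:
  assumes "\<sigma> > 0"
  shows "integrable lborel (gauss'_envelope \<sigma>)"
proof -
  have "sqrt 2 * \<sigma> > 0"
    using assms by simp
  then have "integrable lborel (\<lambda>x. exp (1 / (2 * \<sigma>\<^sup>2)) * sqrt 2 / \<sigma>\<^sup>2 *
               (gauss (sqrt 2 * \<sigma>) x * \<bar>x\<bar> + gauss (sqrt 2 * \<sigma>) x))"
    using integrable_gauss_abs_moment integrable_gauss by auto
  then show ?thesis
    by (simp add: gauss'_envelope_def[abs_def] algebra_simps)
qed

lemma abs_gauss'_le_envelope:
  assumes \<sigma>: "\<sigma> > 0" and tx: "\<bar>t - x\<bar> \<le> 1"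
  shows "\<bar>gauss' \<sigma> t\<bar> \<le> gauss'_envelope \<sigma> x"
proof -
  have "(x - t)\<^sup>2 \<le> 1"
    using tx abs_le_square_iff[of "x - t" 1] by (simp add: abs_minus_commute)
  then have "x\<^sup>2 \<le> 2 * t\<^sup>2 + 2"
    using zero_le_power2[of "x - 2 * t"] by (simp add: power2_eq_square algebra_simps)
  then have exponent: "- t\<^sup>2 / (2 * \<sigma>\<^sup>2) \<le> 1 / (2 * \<sigma>\<^sup>2) + - x\<^sup>2 / (2 * (sqrt 2 * \<sigma>)\<^sup>2)"
    using \<sigma> by (simp add: power_mult_distrib field_simps)
  have sqrt_eq: "sqrt (2 * pi * (sqrt 2 * \<sigma>)\<^sup>2) = sqrt 2 * sqrt (2 * pi * \<sigma>\<^sup>2)"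
    by (simp add: power_mult_distrib real_sqrt_mult)
  have "\<bar>gauss' \<sigma> t\<bar> = \<bar>t\<bar> / \<sigma>\<^sup>2 * (exp (- t\<^sup>2 / (2 * \<sigma>\<^sup>2)) / sqrt (2 * pi * \<sigma>\<^sup>2))"
    by (simp add: gauss'_def gauss_eq abs_mult abs_divide)
  also have "\<dots> \<le> (\<bar>x\<bar> + 1) / \<sigma>\<^sup>2 *
      (exp (1 / (2 * \<sigma>\<^sup>2) + - x\<^sup>2 / (2 * (sqrt 2 * \<sigma>)\<^sup>2)) / sqrt (2 * pi * \<sigma>\<^sup>2))"
    using tx exponent by (intro mult_mono divide_right_mono) auto
  also have "\<dots> = gauss'_envelope \<sigma> x"
    unfolding gauss'_envelope_def gauss_eq exp_add sqrt_eq using \<sigma> by (simp add: field_simps)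
  finally show ?thesis .
qed

context
  fixes m :: "real \<Rightarrow> real" and \<sigma> B :: real
  assumes \<sigma>: "\<sigma> > 0" and m [measurable]: "m \<in> borel_measurable borel"
    and m_bound: "\<And>u. \<bar>m u\<bar> \<le> B"
begin

lemma abs_mult_bounded_le: "\<bar>k * m u\<bar> \<le> B * \<bar>k\<bar>"
  using mult_left_mono[OF m_bound[of u] abs_ge_zero[of k]] by (simp add: abs_mult mult.commute)

lemma abs_gauss_mult_bounded_le: "\<bar>gauss \<sigma> (u - w) * m u\<bar> \<le> B * gauss \<sigma> (u - w)"
  using abs_mult_bounded_le[of "gauss \<sigma> (u - w)" u] by simp

lemma integrable_gauss_conv: "integrable lborel (\<lambda>u. gauss \<sigma> (u - w) * m u)"
proof (rule Bochner_Integration.integrable_bound)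
  show "integrable lborel (\<lambda>u. B * gauss \<sigma> (u - w))"
    using lborel_integrable_real_affine[OF integrable_gauss[OF \<sigma>], of 1 "- w"] by simp
  show "AE u in lborel. norm (gauss \<sigma> (u - w) * m u) \<le> norm (B * gauss \<sigma> (u - w))"
    using abs_gauss_mult_bounded_le m_bound[of 0] by (simp add: abs_mult)
qed measurable

lemma integrable_gauss'_conv: "integrable lborel (\<lambda>u. gauss' \<sigma> (u - w) * m u)"
proof (rule Bochner_Integration.integrable_bound)
  show "integrable lborel (\<lambda>u. B * \<bar>gauss' \<sigma> (u - w)\<bar>)"
    using lborel_integrable_real_affine[OF integrable_abs_gauss'[OF \<sigma>], of 1 "- w"] by simp
  show "AE u in lborel. norm (gauss' \<sigma> (u - w) * m u) \<le> norm (B * \<bar>gauss' \<sigma> (u - w)\<bar>)"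
    using abs_mult_bounded_le m_bound[of 0] by (simp add: abs_mult)
qed measurable

lemma abs_gauss_conv_le: "\<bar>\<integral>u. gauss \<sigma> (u - w) * m u \<partial>lborel\<bar> \<le> B"
proof -
  have "\<bar>\<integral>u. gauss \<sigma> (u - w) * m u \<partial>lborel\<bar> \<le> (\<integral>u. B * gauss \<sigma> (u - w) \<partial>lborel)"
    using integrable_gauss_conv lborel_integrable_real_affine[OF integrable_gauss[OF \<sigma>], of 1 "- w"]
    by (intro integral_abs_bound_integral abs_gauss_mult_bounded_le) auto
  also have "\<dots> = B"
    using lborel_integral_real_affine[of 1 "gauss \<sigma>" "- w"] integral_gauss[OF \<sigma>] by simp
  finally show ?thesis .
qed

lemma abs_gauss'_conv_le: "\<bar>\<integral>u. gauss' \<sigma> (u - w) * m u \<partial>lborel\<bar> \<le> B / \<sigma>"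
proof -
  have "\<bar>\<integral>u. gauss' \<sigma> (u - w) * m u \<partial>lborel\<bar> \<le> (\<integral>u. B * \<bar>gauss' \<sigma> (u - w)\<bar> \<partial>lborel)"
    using integrable_gauss'_conv lborel_integrable_real_affine[OF integrable_abs_gauss'[OF \<sigma>], of 1 "- w"]
    by (intro integral_abs_bound_integral abs_mult_bounded_le) auto
  also have "\<dots> = B * (\<integral>u. \<bar>gauss' \<sigma> u\<bar> \<partial>lborel)"
    using lborel_integral_real_affine[of 1 "\<lambda>u. \<bar>gauss' \<sigma> u\<bar>" "- w"] by simp
  also have "\<dots> \<le> B / \<sigma>"
    using mult_left_mono[OF integral_abs_gauss'_le[OF \<sigma>], of B] m_bound[of 0] by simp
  finally show ?thesis .
qed

lemma abs_gauss'_conv_le_envelope: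
  "\<bar>t - w\<bar> < 1 \<Longrightarrow> \<bar>gauss' \<sigma> (u - t) * m u\<bar> \<le> B * gauss'_envelope \<sigma> (u - w)"
  using abs_gauss'_le_envelope[OF \<sigma>, of "u - t" "u - w"] m_bound[of u] gauss'_envelope_nonneg
  by (simp add: abs_mult mult_mono mult.commute)

lemma has_real_derivative_gauss_conv:
  "((\<lambda>w. \<integral>u. gauss \<sigma> (u - w) * m u \<partial>lborel) has_real_derivative
      (\<integral>u. - gauss' \<sigma> (u - w) * m u \<partial>lborel)) (at w)"
proof (rule has_real_derivative_integral[where r=1 and e="\<lambda>u. B * gauss'_envelope \<sigma> (u - w)"])
  show "((\<lambda>t. gauss \<sigma> (u - t) * m u) has_real_derivative - gauss' \<sigma> (u - t) * m u) (at t)" for u t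
  proof -
    have "((\<lambda>t. u - t) has_real_derivative - 1) (at t)"
      by (auto intro!: derivative_eq_intros)
    from DERIV_cmult_right[OF DERIV_chain2[OF has_real_derivative_gauss[OF \<sigma>] this], of "m u"]
    show ?thesis by simp
  qed
  show "integrable lborel (\<lambda>u. B * gauss'_envelope \<sigma> (u - w))"
    using lborel_integrable_real_affine[OF integrable_gauss'_envelope[OF \<sigma>], of 1 "- w"] by simp
qed (use integrable_gauss_conv abs_gauss'_conv_le_envelope in auto)

lemma isCont_gauss'_conv: "isCont (\<lambda>w. \<integral>u. gauss' \<sigma> (u - w) * m u \<partial>lborel) w"
proof (rule isCont_integral[where r=1 and e="\<lambda>u. B * gauss'_envelope \<sigma> (u - w)"])
  show "isCont (\<lambda>t. gauss' \<sigma> (u - t) * m u) w" for u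
    by (intro continuous_intros isCont_o2[OF _ isCont_gauss'[OF \<sigma>]])
  show "integrable lborel (\<lambda>u. B * gauss'_envelope \<sigma> (u - w))"
    using lborel_integrable_real_affine[OF integrable_gauss'_envelope[OF \<sigma>], of 1 "- w"] by simp
qed (use abs_gauss'_conv_le_envelope in auto)

end

text \<open>Pairing \<open>u\<close> with \<open>- u\<close>, the integral equals that of \<open>(gauss \<sigma> (u - w) - gauss \<sigma> (u + w)) * D u\<close>
  over \<open>u \<ge> 0\<close>, where both factors are nonnegative.\<close>

lemma gauss_conv_odd_nonneg:
  fixes D :: "real \<Rightarrow> real"
  assumes \<sigma>: "\<sigma> > 0" and D_measurable [measurable]: "D \<in> borel_measurable borel" and D_bound: "\<And>u. \<bar>D u\<bar> \<le> B"
    and D_odd: "\<And>u. D (- u) = - D u" and D_nonneg: "\<And>u. 0 \<le> u \<Longrightarrow> 0 \<le> D u" and w: "0 \<le> w"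
  shows "0 \<le> (\<integral>u. gauss \<sigma> (u - w) * D u \<partial>lborel)"
proof -
  let ?J = "\<lambda>w. \<integral>u. gauss \<sigma> (u - w) * D u \<partial>lborel"
  have "?J w = (\<integral>u. gauss \<sigma> (- u - w) * D (- u) \<partial>lborel)"
    using lborel_integral_real_affine[of "- 1" "\<lambda>u. gauss \<sigma> (u - w) * D u" 0] by simp
  also have "\<dots> = - ?J (- w)"
    using gauss_minus[of \<sigma> "u + w" for u] by (simp add: D_odd add.commute)
  finally have J_minus: "?J w = - ?J (- w)" .
  have "0 \<le> (gauss \<sigma> (u - w) - gauss \<sigma> (u + w)) * D u" for u
  proof (cases "0 \<le> u")
    case True
    then show ?thesis
      using w D_nonneg[OF True] by (intro mult_nonneg_nonneg) (auto intro!: gauss_antimono)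
  next
    case False
    then show ?thesis
      using w D_nonneg[of "- u"] D_odd[of u] by (intro mult_nonpos_nonpos) (auto intro!: gauss_antimono)
  qed
  then have "0 \<le> (\<integral>u. (gauss \<sigma> (u - w) - gauss \<sigma> (u - - w)) * D u \<partial>lborel)"
    by (intro integral_nonneg_AE) simp
  also have "\<dots> = ?J w - ?J (- w)"
    using integrable_gauss_conv[OF \<sigma> D_measurable D_bound, of w]
      integrable_gauss_conv[OF \<sigma> D_measurable D_bound, of "- w"]
    by (simp add: left_diff_distrib)
  finally show ?thesis
    using J_minus by simp
qed

section \<open>Random walks killed at barriers\<close>

definition barrier_event :: "nat \<Rightarrow> (nat \<Rightarrow> real) \<Rightarrow> real \<Rightarrow> real \<Rightarrow> (nat \<Rightarrow> real) \<Rightarrow> bool" where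
  "barrier_event n a w x \<xi> \<longleftrightarrow>
     w + (\<Sum>i\<le>n. \<xi> i) \<le> x \<and> (\<forall>k\<in>{1..n}. a k \<le> \<bar>w + (\<Sum>i<k. \<xi> i)\<bar>)"

lemma barrier_event_0: "barrier_event 0 a w x \<xi> \<longleftrightarrow> w + \<xi> 0 \<le> x"
  by (simp add: barrier_event_def)

lemma barrier_event_Suc:
  "barrier_event (Suc n) a w x \<xi> \<longleftrightarrow>
     a 1 \<le> \<bar>w + \<xi> 0\<bar> \<and> barrier_event n (\<lambda>k. a (Suc k)) (w + \<xi> 0) x (\<lambda>i. \<xi> (Suc i))"
proof -
  have "{1..Suc n} = insert 1 (Suc ` {1..n})"
    by auto
  then have "(\<forall>k\<in>{1..Suc n}. P k) \<longleftrightarrow> P 1 \<and> (\<forall>k\<in>{1..n}. P (Suc k))" for P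
    by (simp del: image_Suc_atLeastAtMost)
  then show ?thesis
    unfolding barrier_event_def sum.atMost_Suc_shift
    by (simp add: sum.lessThan_Suc_shift add.assoc conj_ac del: sum.lessThan_Suc)
qed

lemma Fcdf_eq_barrier_event:
  "Fcdf M W n a w x = measure M {\<omega> \<in> space M. barrier_event n a w x (\<lambda>i. W (Suc i) \<omega>)}"
proof -
  have "Sigma_sum W k \<omega> = (\<Sum>i<k. W (Suc i) \<omega>)" for k \<omega>
    by (simp add: Sigma_sum_def sum.atLeast1_atMost_eq)
  then show ?thesis
    by (simp add: Fcdf_def barrier_event_def lessThan_Suc_atMost[symmetric])
qed

text \<open>With \<open>S\<^sub>k\<close> the sum of the first \<open>k\<close> steps of a random walk with step law \<open>P\<close>,
  \<open>killed_walk P g n a w x\<close> is the expectation of \<open>g (x - w - S\<^sub>n)\<close> on the event that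
  \<open>\<bar>w + S\<^sub>k\<bar> \<ge> a k\<close> for \<open>k = 1, \<dots>, n\<close>.\<close>

primrec killed_walk ::
  "real measure \<Rightarrow> (real \<Rightarrow> real) \<Rightarrow> nat \<Rightarrow> (nat \<Rightarrow> real) \<Rightarrow> real \<Rightarrow> real \<Rightarrow> real" where
  "killed_walk P g 0 a w x = g (x - w)"
| "killed_walk P g (Suc n) a w x =
     (\<integral>v. indicator {v. a 1 \<le> \<bar>w + v\<bar>} v * killed_walk P g n (\<lambda>k. a (Suc k)) (w + v) x \<partial>P)"

lemma killed_walk_nonneg: "(\<And>t. 0 \<le> g t) \<Longrightarrow> 0 \<le> killed_walk P g n a w x"
  by (induction n arbitrary: a w) (auto intro!: integral_nonneg_AE)

context
  fixes P :: "real measure"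
  assumes P: "prob_space P" and sets_P [measurable_cong]: "sets P = sets borel"
begin

lemma measurable_killed_walk [measurable]:
  assumes [measurable]: "g \<in> borel_measurable borel"
  shows "(\<lambda>w. killed_walk P g n a w x) \<in> borel_measurable borel"
proof (induction n arbitrary: a)
  case 0
  show ?case by simp
next
  case (Suc n)
  interpret prob_space P by (rule P)
  have [measurable]: "(\<lambda>w. killed_walk P g n (\<lambda>k. a (Suc k)) w x) \<in> borel_measurable borel"
    by (rule Suc.IH)
  show ?case
    unfolding killed_walk.simps
    by (rule borel_measurable_lebesgue_integral[unfolded split_beta']) measurable
qed

lemma abs_killed_walk_le:
  assumes [measurable]: "g \<in> borel_measurable borel" and "\<And>t. \<bar>g t\<bar> \<le> B"
  shows "\<bar>killed_walk P g n a w x\<bar> \<le> B"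
proof (induction n arbitrary: a w)
  case 0
  show ?case using assms(2) by simp
next
  case (Suc n)
  interpret prob_space P by (rule P)
  show ?case
    unfolding killed_walk.simps
    using Suc.IH order_trans[OF abs_ge_zero assms(2)]
    by (intro abs_integral_le_const) (auto simp: indicator_def)
qed

lemma killed_walk_has_real_derivative:
  assumes g [measurable]: "g \<in> borel_measurable borel" and "\<And>t. \<bar>g t\<bar> \<le> B"
    and g' [measurable]: "g' \<in> borel_measurable borel" and "\<And>t. \<bar>g' t\<bar> \<le> B'"
    and "\<And>t. (g has_real_derivative g' t) (at t)"
  shows "((\<lambda>x. killed_walk P g n a w x) has_real_derivative killed_walk P g' n a w x) (at x)"
proof (induction n arbitrary: a w x)
  case 0
  have "((\<lambda>x. x - w) has_real_derivative 1) (at x)"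
    by (auto intro!: derivative_eq_intros)
  from DERIV_chain2[OF assms(5) this] show ?case
    by simp
next
  case (Suc n)
  interpret prob_space P by (rule P)
  show ?case
    unfolding killed_walk.simps
  proof (rule has_real_derivative_integral[where r=1 and e="\<lambda>_. B'"])
    show "integrable P (\<lambda>v. indicator {v. a 1 \<le> \<bar>w + v\<bar>} v * killed_walk P g n (\<lambda>k. a (Suc k)) (w + v) t)"
      for t
      using abs_killed_walk_le[OF g assms(2)] order_trans[OF abs_ge_zero assms(2)]
      by (intro integrable_const_bound[where B=B]) (auto simp: indicator_def)
    show "\<bar>indicator {v. a 1 \<le> \<bar>w + v\<bar>} v * killed_walk P g' n (\<lambda>k. a (Suc k)) (w + v) t\<bar> \<le> B'"
      for v t
      using abs_killed_walk_le[OF g' assms(4)] order_trans[OF abs_ge_zero assms(4)]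
      by (auto simp: indicator_def)
  qed (auto intro!: DERIV_cmult Suc.IH)
qed

lemma killed_walk_minus:
  assumes [measurable]: "g \<in> borel_measurable borel" and "\<And>t. g (- t) = g t"
    and sym: "\<And>h :: real \<Rightarrow> real. h \<in> borel_measurable borel \<Longrightarrow> (\<integral>v. h (- v) \<partial>P) = (\<integral>v. h v \<partial>P)"
  shows "killed_walk P g n a (- w) (- x) = killed_walk P g n a w x"
proof (induction n arbitrary: a w)
  case 0
  show ?case using assms(2)[of "x - w"] by simp
next
  case (Suc n)
  let ?h = "\<lambda>v. indicator {v. a 1 \<le> \<bar>- w + v\<bar>} v * killed_walk P g n (\<lambda>k. a (Suc k)) (- w + v) (- x)"
  have "?h \<in> borel_measurable borel"
    by measurable
  from sym[OF this] have "killed_walk P g (Suc n) a (- w) (- x) = (\<integral>v. ?h (- v) \<partial>P)"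
    by simp
  also have "\<dots> = killed_walk P g (Suc n) a w x"
    unfolding killed_walk.simps minus_add_distrib[symmetric] Suc.IH
    by (simp add: indicator_def abs_minus_commute add.commute)
  finally show ?case .
qed

end

section \<open>Wiener increments over independent random times\<close>

lemma (in prob_space) nn_integral_indep_var_freeze:
  assumes ind: "indep_var S X T \<Xi>" and f [measurable]: "f \<in> measurable S K"
    and Q [measurable]: "case_prod Q \<in> borel_measurable (K \<Otimes>\<^sub>M T)"
  shows "(\<integral>\<^sup>+\<omega>. Q (f (X \<omega>)) (\<Xi> \<omega>) \<partial>M) = (\<integral>\<^sup>+v. (\<integral>\<^sup>+\<omega>. Q v (\<Xi> \<omega>) \<partial>M) \<partial>distr M K (\<lambda>\<omega>. f (X \<omega>)))"
proof -
  have X [measurable]: "X \<in> measurable M S" and \<Xi> [measurable]: "\<Xi> \<in> measurable M T"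
    using indep_var_rv1[OF ind] indep_var_rv2[OF ind] .
  interpret DX: prob_space "distr M S X"
    by (rule prob_space_distr) simp
  interpret D\<Xi>: prob_space "distr M T \<Xi>"
    by (rule prob_space_distr) simp
  interpret pair_sigma_finite "distr M S X" "distr M T \<Xi>" ..
  have Q': "(\<lambda>(x, \<xi>). Q (f x) \<xi>) \<in> borel_measurable (distr M S X \<Otimes>\<^sub>M distr M T \<Xi>)"
    by (simp cong: measurable_cong_sets[OF sets_pair_measure_cong[OF sets_distr sets_distr] refl])
  have "(\<integral>\<^sup>+\<omega>. Q (f (X \<omega>)) (\<Xi> \<omega>) \<partial>M) =
      (\<integral>\<^sup>+p. Q (f (fst p)) (snd p) \<partial>distr M (S \<Otimes>\<^sub>M T) (\<lambda>\<omega>. (X \<omega>, \<Xi> \<omega>)))"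
    by (subst nn_integral_distr) auto
  also have "\<dots> = (\<integral>\<^sup>+p. Q (f (fst p)) (snd p) \<partial>(distr M S X \<Otimes>\<^sub>M distr M T \<Xi>))"
    using ind by (simp add: indep_var_distribution_eq)
  also have "\<dots> = (\<integral>\<^sup>+x. (\<integral>\<^sup>+\<xi>. Q (f x) \<xi> \<partial>distr M T \<Xi>) \<partial>distr M S X)"
    using D\<Xi>.nn_integral_fst[OF Q'] by (simp add: split_beta')
  also have "\<dots> = (\<integral>\<^sup>+v. (\<integral>\<^sup>+\<xi>. Q v \<xi> \<partial>distr M T \<Xi>) \<partial>distr M K (\<lambda>\<omega>. f (X \<omega>)))"
  proof -
    have "case_prod Q \<in> borel_measurable (K \<Otimes>\<^sub>M distr M T \<Xi>)"
      by (simp cong: measurable_cong_sets[OF sets_pair_measure_cong[OF refl sets_distr] refl])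
    from D\<Xi>.borel_measurable_nn_integral[OF this]
    have [measurable]: "(\<lambda>v. \<integral>\<^sup>+\<xi>. Q v \<xi> \<partial>distr M T \<Xi>) \<in> borel_measurable K" .
    show ?thesis
      by (simp add: nn_integral_distr)
  qed
  also have "\<dots> = (\<integral>\<^sup>+v. (\<integral>\<^sup>+\<omega>. Q v (\<Xi> \<omega>) \<partial>M) \<partial>distr M K (\<lambda>\<omega>. f (X \<omega>)))"
    by (intro nn_integral_cong) (simp add: nn_integral_distr measurable_Pair2[OF Q])
  finally show ?thesis .
qed

locale random_time_increments = prob_space M for M :: "'a measure" +
  fixes Y Z :: "nat \<Rightarrow> 'a \<Rightarrow> real" and \<epsilon> :: real
  assumes indep: "indep_vars (\<lambda>_. borel) (\<lambda>i. case i of Inl k \<Rightarrow> Y k | Inr k \<Rightarrow> Z k) UNIV"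
    and iid: "\<And>k. distr M borel (Y k) = distr M borel (Y 0)"
    and normal: "\<And>k. distributed M lborel (Z k) (\<lambda>x. ennreal (std_normal_density x))"
    and eps: "\<epsilon> > 0" and Y_ge: "AE \<omega> in M. Y 0 \<omega> \<ge> \<epsilon>"
begin

definition "\<nu> = distr M borel (Y 0)"

text \<open>\<open>Y \<ge> \<epsilon>\<close> holds only almost surely; truncating at \<open>\<epsilon>\<close> makes the standard deviation positive
  everywhere.\<close>

definition "sd y = sqrt (max y \<epsilon>)"

definition "sd_min = sqrt \<epsilon>"

lemma sd_min_pos: "sd_min > 0"
  using eps by (simp add: sd_min_def)

lemma sd_min_le_sd: "sd_min \<le> sd y"
  by (simp add: sd_min_def sd_def)

lemma sd_pos: "sd y > 0"
  using sd_min_pos sd_min_le_sd[of y] by linarith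

lemma measurable_sd [measurable]: "sd \<in> borel_measurable borel"
  unfolding sd_def[abs_def] by measurable

lemma Y_measurable [measurable]: "Y k \<in> borel_measurable M"
  using indep[unfolded indep_vars_def, THEN conjunct1, rule_format, of "Inl k"] by simp

lemma Z_measurable [measurable]: "Z k \<in> borel_measurable M"
  using indep[unfolded indep_vars_def, THEN conjunct1, rule_format, of "Inr k"] by simp

lemma WY_measurable [measurable]: "WY Y Z k \<in> borel_measurable M"
  unfolding WY_def[abs_def] by measurable

lemma prob_space_\<nu>: "prob_space \<nu>"
  unfolding \<nu>_def by (rule prob_space_distr) simp

lemma sets_\<nu> [measurable_cong, simp]: "sets \<nu> = sets borel"
  by (simp add: \<nu>_def)

lemma AE_Y_ge: "AE \<omega> in M. Y k \<omega> \<ge> \<epsilon>"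
proof -
  have "AE y in distr M borel (Y k). y \<ge> \<epsilon>"
    unfolding iid[of k] using Y_ge by (subst AE_distr_iff) auto
  then show ?thesis
    by (subst (asm) AE_distr_iff) auto
qed

lemma indep_var_Y_Z: "indep_var borel (Y k) borel (Z k)"
proof -
  let ?V = "\<lambda>i. case i of Inl k \<Rightarrow> Y k | Inr k \<Rightarrow> Z k"
  have "indep_var (PiM {Inl k} (\<lambda>_. borel)) (\<lambda>\<omega>. restrict (\<lambda>i. ?V i \<omega>) {Inl k})
                  (PiM {Inr k} (\<lambda>_. borel)) (\<lambda>\<omega>. restrict (\<lambda>i. ?V i \<omega>) {Inr k})"
    by (rule indep_var_restrict[OF indep]) auto
  from indep_var_compose[OF this measurable_component_singleton measurable_component_singleton]
  show ?thesis
    by (simp add: comp_def)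
qed

lemma nn_integral_scaled_Z:
  fixes h :: "real \<Rightarrow> ennreal"
  assumes [measurable]: "h \<in> borel_measurable borel" and \<sigma>: "\<sigma> > 0"
  shows "(\<integral>\<^sup>+\<omega>. h (\<sigma> * Z k \<omega>) \<partial>M) = (\<integral>\<^sup>+u. gauss \<sigma> u * h u \<partial>lborel)"
proof -
  have [measurable]: "Z k \<in> measurable M lborel"
    using normal[of k] by (rule distributed_measurable)
  have "(\<integral>\<^sup>+\<omega>. h (\<sigma> * Z k \<omega>) \<partial>M) = (\<integral>\<^sup>+z. h (\<sigma> * z) \<partial>distr M lborel (Z k))"
    by (simp add: nn_integral_distr)
  also have "\<dots> = (\<integral>\<^sup>+z. std_normal_density z * h (\<sigma> * z) \<partial>lborel)"
    using normal[of k] by (simp add: distributed_def nn_integral_density)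
  also have "\<dots> = (\<integral>\<^sup>+z. \<sigma> * (gauss \<sigma> (0 + \<sigma> * z) * h (0 + \<sigma> * z)) \<partial>lborel)"
  proof -
    have "ennreal \<sigma> * ennreal (gauss \<sigma> (\<sigma> * z)) = ennreal (std_normal_density z)" for z
      using gauss_scale[OF \<sigma>, of z] \<sigma> by (simp flip: ennreal_mult)
    then show ?thesis
      by (simp add: mult.assoc[symmetric])
  qed
  also have "\<dots> = (\<integral>\<^sup>+u. gauss \<sigma> u * h u \<partial>lborel)"
    using \<sigma> nn_integral_real_affine[of "\<lambda>u. gauss \<sigma> u * h u" \<sigma> 0]
    by (simp add: nn_integral_cmult)
  finally show ?thesis .
qed

lemma nn_integral_WY_mixture:
  fixes h :: "real \<Rightarrow> ennreal"
  assumes [measurable]: "h \<in> borel_measurable borel"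
  shows "(\<integral>\<^sup>+\<omega>. h (WY Y Z k \<omega>) \<partial>M) = (\<integral>\<^sup>+y. (\<integral>\<^sup>+u. gauss (sd y) u * h u \<partial>lborel) \<partial>\<nu>)"
proof -
  have "(\<integral>\<^sup>+\<omega>. h (WY Y Z k \<omega>) \<partial>M) = (\<integral>\<^sup>+\<omega>. h (sd (Y k \<omega>) * Z k \<omega>) \<partial>M)"
    using AE_Y_ge[of k] by (intro nn_integral_cong_AE) (auto simp: WY_def sd_def max_def)
  also have "\<dots> = (\<integral>\<^sup>+y. (\<integral>\<^sup>+\<omega>. h (sd y * Z k \<omega>) \<partial>M) \<partial>distr M borel (Y k))"
    using nn_integral_indep_var_freeze[OF indep_var_Y_Z measurable_ident_sets[OF refl],
        of "\<lambda>y z. h (sd y * z)"] by simp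
  also have "\<dots> = (\<integral>\<^sup>+y. (\<integral>\<^sup>+u. gauss (sd y) u * h u \<partial>lborel) \<partial>\<nu>)"
    unfolding iid[of k] \<nu>_def[symmetric] by (simp add: nn_integral_scaled_Z sd_pos)
  finally show ?thesis .
qed

definition "dens x = (\<integral>y. gauss (sd y) x \<partial>\<nu>)"
definition "dens' x = (\<integral>y. gauss' (sd y) x \<partial>\<nu>)"
definition "dens'' x = (\<integral>y. gauss'' (sd y) x \<partial>\<nu>)"

lemma measurable_dens [measurable]: "dens \<in> borel_measurable borel"
proof -
  interpret \<nu>: prob_space \<nu> by (rule prob_space_\<nu>)
  show ?thesis
    unfolding dens_def[abs_def] by measurable
qed

lemma dens_nonneg: "0 \<le> dens x"
  by (simp add: dens_def)

lemma dens_minus: "dens (- x) = dens x"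
  by (simp add: dens_def gauss_minus)

lemma integrable_gauss_sd: "integrable \<nu> (\<lambda>y. gauss (sd y) x)"
proof -
  interpret \<nu>: prob_space \<nu> by (rule prob_space_\<nu>)
  show ?thesis
    using gauss_le[OF sd_min_pos sd_min_le_sd]
    by (intro \<nu>.integrable_const_bound[where B="1 / sd_min"]) auto
qed

lemma dens_antimono: "\<bar>s\<bar> \<le> \<bar>t\<bar> \<Longrightarrow> dens t \<le> dens s"
  unfolding dens_def by (intro integral_mono integrable_gauss_sd gauss_antimono)

lemma
  shows abs_dens_le: "\<bar>dens x\<bar> \<le> 1 / sd_min"
    and abs_dens'_le: "\<bar>dens' x\<bar> \<le> 1 / sd_min\<^sup>2"
    and abs_dens''_le: "\<bar>dens'' x\<bar> \<le> 3 / sd_min ^ 3"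
proof -
  interpret \<nu>: prob_space \<nu> by (rule prob_space_\<nu>)
  show "\<bar>dens x\<bar> \<le> 1 / sd_min"
    unfolding dens_def using gauss_le[OF sd_min_pos sd_min_le_sd]
    by (intro \<nu>.abs_integral_le_const) auto
  show "\<bar>dens' x\<bar> \<le> 1 / sd_min\<^sup>2"
    unfolding dens'_def using abs_gauss'_le[OF sd_min_pos sd_min_le_sd]
    by (intro \<nu>.abs_integral_le_const) auto
  show "\<bar>dens'' x\<bar> \<le> 3 / sd_min ^ 3"
    unfolding dens''_def using abs_gauss''_le[OF sd_min_pos sd_min_le_sd]
    by (intro \<nu>.abs_integral_le_const) auto
qed

lemma has_real_derivative_dens: "(dens has_real_derivative dens' x) (at x)"
proof -
  interpret \<nu>: prob_space \<nu> by (rule prob_space_\<nu>)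
  show ?thesis
    unfolding dens_def[abs_def] dens'_def
    using gauss_le[OF sd_min_pos sd_min_le_sd] abs_gauss'_le[OF sd_min_pos sd_min_le_sd]
    by (intro has_real_derivative_integral[where r=1 and e="\<lambda>_. 1 / sd_min\<^sup>2"]
        has_real_derivative_gauss sd_pos \<nu>.integrable_const \<nu>.integrable_const_bound[where B="1 / sd_min"]) auto
qed

lemma has_real_derivative_dens': "(dens' has_real_derivative dens'' x) (at x)"
proof -
  interpret \<nu>: prob_space \<nu> by (rule prob_space_\<nu>)
  show ?thesis
    unfolding dens'_def[abs_def] dens''_def
    using abs_gauss'_le[OF sd_min_pos sd_min_le_sd] abs_gauss''_le[OF sd_min_pos sd_min_le_sd]
    by (intro has_real_derivative_integral[where r=1 and e="\<lambda>_. 3 / sd_min ^ 3"]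
        has_real_derivative_gauss' sd_pos \<nu>.integrable_const \<nu>.integrable_const_bound[where B="1 / sd_min\<^sup>2"]) auto
qed

lemma isCont_dens: "isCont dens x"
  using has_real_derivative_dens DERIV_isCont by blast

lemma continuous_on_dens': "continuous_on UNIV dens'"
  using has_real_derivative_dens' by (intro continuous_at_imp_continuous_on) (blast intro: DERIV_isCont)

lemma distr_WY: "distr M borel (WY Y Z k) = density lborel dens"
proof (rule measure_eqI)
  interpret \<nu>: prob_space \<nu> by (rule prob_space_\<nu>)
  interpret pair_sigma_finite \<nu> lborel ..
  fix A assume "A \<in> sets (distr M borel (WY Y Z k))"
  then have [measurable]: "A \<in> sets borel"
    by simp
  have "emeasure (distr M borel (WY Y Z k)) A = (\<integral>\<^sup>+v. indicator A v \<partial>distr M borel (WY Y Z k))"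
    by (rule nn_integral_indicator[symmetric]) simp
  also have "\<dots> = (\<integral>\<^sup>+\<omega>. indicator A (WY Y Z k \<omega>) \<partial>M)"
    by (rule nn_integral_distr) simp_all
  also have "\<dots> = (\<integral>\<^sup>+y. (\<integral>\<^sup>+u. ennreal (gauss (sd y) u) * indicator A u \<partial>lborel) \<partial>\<nu>)"
    by (rule nn_integral_WY_mixture) simp
  also have "\<dots> = (\<integral>\<^sup>+u. (\<integral>\<^sup>+y. ennreal (gauss (sd y) u) * indicator A u \<partial>\<nu>) \<partial>lborel)"
    by (rule Fubini'[symmetric]) measurable
  also have "\<dots> = (\<integral>\<^sup>+u. ennreal (dens u) * indicator A u \<partial>lborel)"
    unfolding dens_def
    by (intro nn_integral_cong) (simp add: nn_integral_multc nn_integral_eq_integral integrable_gauss_sd)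
  also have "\<dots> = emeasure (density lborel dens) A"
    by (simp add: emeasure_density)
  finally show "emeasure (distr M borel (WY Y Z k)) A = emeasure (density lborel dens) A" .
qed simp

lemma distributed_WY: "distributed M lborel (WY Y Z k) (\<lambda>x. ennreal (dens x))"
  unfolding distributed_def using distr_WY[of k] by (simp add: distr_cong[OF refl sets_lborel])

lemma WY_density_regular:
  "\<exists>f f' f''. distributed M lborel (WY Y Z 0) (\<lambda>x. ennreal (f x))
      \<and> (\<forall>x. (f has_real_derivative f' x) (at x))
      \<and> (\<forall>x. (f' has_real_derivative f'' x) (at x))
      \<and> continuous_on UNIV f'
      \<and> bounded (range f) \<and> bounded (range f') \<and> bounded (range f'')
      \<and> uniformly_continuous_on UNIV f \<and> uniformly_continuous_on UNIV f'"
proof (intro exI conjI allI)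
  have lipschitz: "C-lipschitz_on UNIV g"
    if "\<And>x. (g has_real_derivative g' x) (at x)" "\<And>x. \<bar>g' x\<bar> \<le> C" for g g' :: "real \<Rightarrow> real" and C
    using that order_trans[OF abs_ge_zero that(2)]
    by (intro lipschitz_on_real_derivative_bound) auto
  show "uniformly_continuous_on UNIV dens"
    by (rule lipschitz_on_uniformly_continuous[OF lipschitz[OF has_real_derivative_dens abs_dens'_le]])
  show "uniformly_continuous_on UNIV dens'"
    by (rule lipschitz_on_uniformly_continuous[OF lipschitz[OF has_real_derivative_dens' abs_dens''_le]])
  show "continuous_on UNIV dens'"
    by (rule continuous_on_dens')
  show "bounded (range dens)" "bounded (range dens')" "bounded (range dens'')"
    unfolding bounded_real using abs_dens_le abs_dens'_le abs_dens''_le by blast+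
qed (use distributed_WY has_real_derivative_dens has_real_derivative_dens' in auto)

definition "law = distr M borel (WY Y Z 0)"

definition "law_cdf t = measure law {..t}"

lemma law_eq_density: "law = density lborel dens"
  unfolding law_def by (rule distr_WY)

lemma distr_WY_eq_law: "distr M borel (WY Y Z k) = law"
  by (simp add: law_eq_density distr_WY)

lemma prob_space_law: "prob_space law"
  unfolding law_def by (rule prob_space_distr) simp

lemma sets_law [measurable_cong, simp]: "sets law = sets borel"
  by (simp add: law_def)

lemma measurable_law_cdf [measurable]: "law_cdf \<in> borel_measurable borel"
proof -
  interpret L: prob_space law by (rule prob_space_law)
  show ?thesis
    by (rule borel_measurable_mono) (auto simp: mono_def law_cdf_def intro!: L.finite_measure_mono)
qed

lemma abs_law_cdf_le: "\<bar>law_cdf t\<bar> \<le> 1"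
proof -
  interpret L: prob_space law by (rule prob_space_law)
  show ?thesis
    by (simp add: law_cdf_def)
qed

lemma has_real_derivative_law_cdf: "(law_cdf has_real_derivative dens x) (at x)"
proof -
  interpret L: prob_space law by (rule prob_space_law)
  have law_Ioc: "measure law {s<..t} = (LBINT u=s..t. dens u)" if "s \<le> t" for s t
  proof -
    have "measure law {s<..t} = enn2real (\<integral>\<^sup>+u. ennreal (dens u) * indicator {s<..t} u \<partial>lborel)"
      unfolding law_eq_density measure_def by (subst emeasure_density) auto
    also have "\<dots> = (\<integral>u. dens u * indicator {s<..t} u \<partial>lborel)"
      by (intro enn2real_nn_integral_eq_integral) (auto simp: dens_nonneg split: split_indicator)
    also have "\<dots> = (LBINT u:{s<..t}. dens u)"
      unfolding set_lebesgue_integral_def by (simp add: mult.commute)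
    finally show ?thesis
      using that by (simp add: interval_integral_Ioc)
  qed
  have "((\<lambda>t. LBINT u=x-1..t. dens u) has_vector_derivative dens x) (at x within {x-1..x+1})"
    using isCont_dens by (intro interval_integral_FTC2 continuous_at_imp_continuous_on) auto
  then have "((\<lambda>t. law_cdf (x-1) + (LBINT u=x-1..t. dens u)) has_real_derivative dens x) (at x)"
    by (auto intro!: derivative_eq_intros
        simp: has_real_derivative_iff_has_vector_derivative at_within_Icc_at)
  then show ?thesis
  proof (rule has_field_derivative_transform_within_open[where S="{x-1<..<x+1}"])
    fix t assume t: "t \<in> {x-1<..<x+1}"
    then have "{..t} = {..x-1} \<union> {x-1<..t}"
      by auto
    then have "law_cdf t = law_cdf (x-1) + measure law {x-1<..t}"
      unfolding law_cdf_def by (simp add: L.finite_measure_Union[of "{..x-1}" "{x-1<..t}"] disjoint_iff)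
    then show "law_cdf (x-1) + (LBINT u=x-1..t. dens u) = law_cdf t"
      using t law_Ioc[of "x-1" t] by simp
  qed auto
qed

lemma indep_vars_WY: "indep_vars (\<lambda>_. borel) (WY Y Z) UNIV"
proof -
  let ?V = "\<lambda>i. case i of Inl k \<Rightarrow> Y k | Inr k \<Rightarrow> Z k"
  have "indep_vars (\<lambda>k. PiM {Inl k, Inr k} (\<lambda>_. borel)) (\<lambda>k \<omega>. restrict (\<lambda>i. ?V i \<omega>) {Inl k, Inr k}) UNIV"
    by (rule indep_vars_restrict[OF indep]) (auto simp: disjoint_family_on_def)
  then have "indep_vars (\<lambda>_. borel)
      (\<lambda>k \<omega>. (\<lambda>g. sqrt (g (Inl k)) * g (Inr k)) (restrict (\<lambda>i. ?V i \<omega>) {Inl k, Inr k})) UNIV"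
    by (rule indep_vars_compose2) measurable
  then show ?thesis
    by (simp add: WY_def[abs_def])
qed

definition "increments m \<omega> = (\<lambda>i. WY Y Z (m + i) \<omega>)"

lemma indep_var_WY_increments:
  "indep_var (PiM {m} (\<lambda>_. borel)) (\<lambda>\<omega>. restrict (\<lambda>k. WY Y Z k \<omega>) {m})
     (PiM UNIV (\<lambda>_. borel)) (increments (Suc m))"
proof -
  have "indep_var (PiM {m} (\<lambda>_. borel)) (\<lambda>\<omega>. restrict (\<lambda>k. WY Y Z k \<omega>) {m})
                  (PiM {Suc m..} (\<lambda>_. borel)) (\<lambda>\<omega>. restrict (\<lambda>k. WY Y Z k \<omega>) {Suc m..})"
    by (rule indep_var_restrict[OF indep_vars_WY]) auto
  moreover have "(\<lambda>g i. g (Suc m + i)) \<in> measurable (PiM {Suc m..} (\<lambda>_. borel)) (PiM UNIV (\<lambda>_. borel :: real measure))"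
    by (rule measurable_PiM_single') (auto intro!: measurable_component_singleton)
  ultimately have "indep_var (PiM {m} (\<lambda>_. borel)) ((\<lambda>g. g) \<circ> (\<lambda>\<omega>. restrict (\<lambda>k. WY Y Z k \<omega>) {m}))
      (PiM UNIV (\<lambda>_. borel)) ((\<lambda>g i. g (Suc m + i)) \<circ> (\<lambda>\<omega>. restrict (\<lambda>k. WY Y Z k \<omega>) {Suc m..}))"
    by (rule indep_var_compose[OF _ measurable_ident_sets[OF refl]])
  then show ?thesis
    by (simp add: comp_def increments_def[abs_def])
qed

lemma measurable_increments [measurable]: "increments m \<in> measurable M (PiM UNIV (\<lambda>_. borel))"
  unfolding increments_def by (rule measurable_PiM_single') auto

lemma sets_barrier_event [measurable]:
  "{\<omega> \<in> space M. barrier_event n a w x (increments m \<omega>)} \<in> sets M"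
  unfolding barrier_event_def by measurable

lemma emeasure_barrier_event_Suc:
  "emeasure M {\<omega> \<in> space M. barrier_event (Suc n) a w x (increments m \<omega>)} =
     (\<integral>\<^sup>+v. indicator {v. a 1 \<le> \<bar>w + v\<bar>} v *
        emeasure M {\<omega> \<in> space M. barrier_event n (\<lambda>k. a (Suc k)) (w + v) x (increments (Suc m) \<omega>)} \<partial>law)"
proof -
  define Q :: "real \<Rightarrow> (nat \<Rightarrow> real) \<Rightarrow> ennreal" where
    "Q v \<xi> = indicator {(v, \<xi>). a 1 \<le> \<bar>w + v\<bar> \<and> barrier_event n (\<lambda>k. a (Suc k)) (w + v) x \<xi>} (v, \<xi>)"
    for v \<xi>
  have [measurable]: "case_prod Q \<in> borel_measurable (borel \<Otimes>\<^sub>M PiM UNIV (\<lambda>_. borel))"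
    unfolding Q_def split_beta' barrier_event_def by measurable
  have "increments m \<omega> 0 = WY Y Z m \<omega>" "(\<lambda>i. increments m \<omega> (Suc i)) = increments (Suc m) \<omega>" for \<omega>
    by (simp_all add: increments_def)
  then have "emeasure M {\<omega> \<in> space M. barrier_event (Suc n) a w x (increments m \<omega>)} =
      (\<integral>\<^sup>+\<omega>. Q (WY Y Z m \<omega>) (increments (Suc m) \<omega>) \<partial>M)"
    by (subst nn_integral_indicator[symmetric, OF sets_barrier_event])
      (auto intro!: nn_integral_cong simp: Q_def barrier_event_Suc split: split_indicator)
  also have "\<dots> = (\<integral>\<^sup>+v. (\<integral>\<^sup>+\<omega>. Q v (increments (Suc m) \<omega>) \<partial>M) \<partial>law)"
    using nn_integral_indep_var_freeze[OF indep_var_WY_increments[of m]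
        measurable_component_singleton[of m "{m}"], of Q]
    by (simp add: distr_WY_eq_law)
  also have "\<dots> = (\<integral>\<^sup>+v. indicator {v. a 1 \<le> \<bar>w + v\<bar>} v *
        emeasure M {\<omega> \<in> space M. barrier_event n (\<lambda>k. a (Suc k)) (w + v) x (increments (Suc m) \<omega>)} \<partial>law)"
  proof (intro nn_integral_cong)
    fix v
    let ?E = "{\<omega> \<in> space M. barrier_event n (\<lambda>k. a (Suc k)) (w + v) x (increments (Suc m) \<omega>)}"
    have "(\<integral>\<^sup>+\<omega>. Q v (increments (Suc m) \<omega>) \<partial>M) =
        (\<integral>\<^sup>+\<omega>. indicator {v. a 1 \<le> \<bar>w + v\<bar>} v * indicator ?E \<omega> \<partial>M)"
      by (intro nn_integral_cong) (simp add: Q_def split: split_indicator)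
    also have "\<dots> = indicator {v. a 1 \<le> \<bar>w + v\<bar>} v * emeasure M ?E"
      using sets_barrier_event by (simp add: nn_integral_cmult)
    finally show "(\<integral>\<^sup>+\<omega>. Q v (increments (Suc m) \<omega>) \<partial>M) = indicator {v. a 1 \<le> \<bar>w + v\<bar>} v * emeasure M ?E" .
  qed
  finally show ?thesis .
qed

lemma measurable_killed_walk_law [measurable (raw)]:
  assumes "g \<in> borel_measurable borel" and "f \<in> borel_measurable N"
  shows "(\<lambda>v. killed_walk law g n a (f v) x) \<in> borel_measurable N"
  using measurable_compose[OF assms(2) measurable_killed_walk[OF prob_space_law sets_law assms(1)]] .

lemma emeasure_barrier_event:
  "emeasure M {\<omega> \<in> space M. barrier_event n a w x (increments m \<omega>)} = killed_walk law law_cdf n a w x"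
proof (induction n arbitrary: m a w)
  case 0
  interpret L: prob_space law by (rule prob_space_law)
  have "{\<omega> \<in> space M. barrier_event 0 a w x (increments m \<omega>)} = WY Y Z m -` {..x - w} \<inter> space M"
    by (auto simp: barrier_event_0 increments_def)
  moreover have "emeasure M (WY Y Z m -` {..x - w} \<inter> space M) = emeasure law {..x - w}"
    by (simp add: emeasure_distr distr_WY_eq_law[of m, symmetric])
  ultimately show ?case
    by (simp add: L.emeasure_eq_measure law_cdf_def)
next
  case (Suc n)
  interpret L: prob_space law by (rule prob_space_law)
  let ?f = "\<lambda>v. indicator {v. a 1 \<le> \<bar>w + v\<bar>} v * killed_walk law law_cdf n (\<lambda>k. a (Suc k)) (w + v) x"
  have f_nonneg: "0 \<le> ?f v" for v
    by (intro mult_nonneg_nonneg killed_walk_nonneg) (simp_all add: law_cdf_def)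
  have "integrable law ?f"
    using abs_killed_walk_le[OF prob_space_law sets_law measurable_law_cdf abs_law_cdf_le]
    by (intro L.integrable_const_bound[where B=1]) (auto simp: indicator_def)
  then show ?case
    unfolding emeasure_barrier_event_Suc Suc.IH killed_walk.simps
    using f_nonneg by (subst nn_integral_eq_integral[symmetric]) (auto simp: ennreal_mult' ennreal_indicator)
qed

lemma Fcdf_eq_killed_walk: "Fcdf M (WY Y Z) n a w x = killed_walk law law_cdf n a w x"
proof -
  have "(\<lambda>i. WY Y Z (Suc i) \<omega>) = increments 1 \<omega>" for \<omega>
    by (simp add: increments_def)
  then show ?thesis
    unfolding Fcdf_eq_barrier_event measure_def
    by (simp only: emeasure_barrier_event) (simp add: killed_walk_nonneg law_cdf_def)
qed

lemma has_real_derivative_Fcdf: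
  "(Fcdf M (WY Y Z) n a w has_real_derivative killed_walk law dens n a w x) (at x)"
  unfolding Fcdf_eq_killed_walk[abs_def]
  by (rule killed_walk_has_real_derivative[OF prob_space_law sets_law measurable_law_cdf abs_law_cdf_le
        measurable_dens abs_dens_le has_real_derivative_law_cdf])

lemma integral_law_mixture:
  assumes h_measurable [measurable]: "h \<in> borel_measurable borel" and h_nonneg: "\<And>u. 0 \<le> h u" and h_le: "\<And>u. h u \<le> B"
  shows "(\<integral>v. h v \<partial>law) = (\<integral>y. (\<integral>u. gauss (sd y) u * h u \<partial>lborel) \<partial>\<nu>)"
proof -
  interpret \<nu>: prob_space \<nu> by (rule prob_space_\<nu>)
  have h_bound: "\<bar>h u\<bar> \<le> B" for u
    using h_nonneg[of u] h_le[of u] by simp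
  let ?I = "\<lambda>y. \<integral>u. gauss (sd y) u * h u \<partial>lborel"
  have I_nonneg: "0 \<le> ?I y" for y
    using h_nonneg by (intro integral_nonneg_AE) auto
  have "(\<integral>\<^sup>+v. h v \<partial>law) = (\<integral>\<^sup>+y. (\<integral>\<^sup>+u. ennreal (gauss (sd y) u) * h u \<partial>lborel) \<partial>\<nu>)"
    unfolding law_def by (simp add: nn_integral_distr nn_integral_WY_mixture[of "\<lambda>u. ennreal (h u)"])
  also have "\<dots> = (\<integral>\<^sup>+y. ?I y \<partial>\<nu>)"
    using integrable_gauss_conv[OF sd_pos h_measurable h_bound, where w=0] h_nonneg
    by (intro nn_integral_cong) (simp add: ennreal_mult'[symmetric] nn_integral_eq_integral)
  also have "\<dots> = (\<integral>y. ?I y \<partial>\<nu>)"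
    using abs_gauss_conv_le[OF sd_pos h_measurable h_bound, where w=0] I_nonneg
    by (intro nn_integral_eq_integral \<nu>.integrable_const_bound[where B=B]) auto
  finally show ?thesis
    using h_nonneg I_nonneg by (subst integral_eq_nn_integral) (auto intro!: integral_nonneg_AE)
qed

lemma integral_law_minus:
  fixes h :: "real \<Rightarrow> real"
  assumes [measurable]: "h \<in> borel_measurable borel"
  shows "(\<integral>v. h (- v) \<partial>law) = (\<integral>v. h v \<partial>law)"
proof -
  have "(\<integral>v. h (- v) \<partial>law) = (\<integral>v. dens (- v) * h (- v) \<partial>lborel)"
    unfolding law_eq_density by (simp add: integral_density dens_nonneg dens_minus)
  also have "\<dots> = (\<integral>v. dens v * h v \<partial>lborel)"
    using lborel_integral_real_affine[of "- 1" "\<lambda>v. dens v * h v" 0] by simp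
  also have "\<dots> = (\<integral>v. h v \<partial>law)"
    unfolding law_eq_density by (simp add: integral_density dens_nonneg)
  finally show ?thesis .
qed

lemma killed_walk_dens_minus: "killed_walk law dens n a (- w) (- x) = killed_walk law dens n a w x"
  by (rule killed_walk_minus[OF prob_space_law sets_law measurable_dens dens_minus integral_law_minus])

definition "survivor_weight n a x u = indicator {u. a 1 \<le> \<bar>u\<bar>} u * killed_walk law dens n (\<lambda>k. a (Suc k)) u x"

lemma measurable_survivor_weight [measurable]: "survivor_weight n a x \<in> borel_measurable borel"
  unfolding survivor_weight_def[abs_def] by measurable

lemma survivor_weight_nonneg: "0 \<le> survivor_weight n a x u"
  by (simp add: survivor_weight_def killed_walk_nonneg dens_nonneg)

lemma survivor_weight_le: "survivor_weight n a x u \<le> 1 / sd_min"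
  using abs_killed_walk_le[OF prob_space_law sets_law measurable_dens abs_dens_le] sd_min_pos
  by (auto simp: survivor_weight_def indicator_def abs_le_iff)

lemma abs_survivor_weight_le: "\<bar>survivor_weight n a x u\<bar> \<le> 1 / sd_min"
  using survivor_weight_nonneg survivor_weight_le by simp

lemma survivor_weight_minus: "survivor_weight n a x (- u) = survivor_weight n a (- x) u"
  using killed_walk_dens_minus[of n "\<lambda>k. a (Suc k)" u "- x"] by (simp add: survivor_weight_def indicator_def)

lemma killed_walk_Suc_mixture:
  "killed_walk law dens (Suc n) a w x =
     (\<integral>y. (\<integral>u. gauss (sd y) (u - w) * survivor_weight n a x u \<partial>lborel) \<partial>\<nu>)"
proof -
  have "killed_walk law dens (Suc n) a w x = (\<integral>v. survivor_weight n a x (w + v) \<partial>law)"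
    by (simp add: survivor_weight_def indicator_def)
  also have "\<dots> = (\<integral>y. (\<integral>u. gauss (sd y) u * survivor_weight n a x (w + u) \<partial>lborel) \<partial>\<nu>)"
    by (rule integral_law_mixture[where B="1 / sd_min"]) (simp_all add: survivor_weight_nonneg survivor_weight_le)
  also have "\<dots> = (\<integral>y. (\<integral>u. gauss (sd y) (u - w) * survivor_weight n a x u \<partial>lborel) \<partial>\<nu>)"
    using lborel_integral_real_affine[of 1 "\<lambda>u. gauss (sd _) (u - w) * survivor_weight n a x u" w]
    by (simp add: add.commute)
  finally show ?thesis .
qed

text \<open>The induction step: the difference of the survivor weights for \<open>x\<close> and \<open>- x\<close> is odd
  (by the reflection symmetry) and, by induction, nonnegative on \<open>[0, \<infinity>)\<close>.\<close>

lemma killed_walk_dens_reflect_le: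
  "0 \<le> w \<Longrightarrow> 0 \<le> x \<Longrightarrow> killed_walk law dens n a w (- x) \<le> killed_walk law dens n a w x"
proof (induction n arbitrary: a w)
  case 0
  then show ?case
    using dens_antimono[of "x - w" "- x - w"] by simp
next
  case (Suc n)
  interpret \<nu>: prob_space \<nu> by (rule prob_space_\<nu>)
  define D where "D u = survivor_weight n a x u - survivor_weight n a (- x) u" for u
  have D_measurable [measurable]: "D \<in> borel_measurable borel"
    unfolding D_def[abs_def] by measurable
  have D_bound: "\<bar>D u\<bar> \<le> 1 / sd_min" for u
    using survivor_weight_nonneg[of n a x u] survivor_weight_le[of n a x u]
      survivor_weight_nonneg[of n a "- x" u] survivor_weight_le[of n a "- x" u]
    by (simp add: D_def abs_le_iff)
  have D_nonneg: "0 \<le> D u" if "0 \<le> u" for u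
    using Suc.IH[of u "\<lambda>k. a (Suc k)"] that Suc.prems by (simp add: D_def survivor_weight_def indicator_def)
  have D_odd: "D (- u) = - D u" for u
    by (simp add: D_def survivor_weight_minus)
  let ?K = "\<lambda>x y. \<integral>u. gauss (sd y) (u - w) * survivor_weight n a x u \<partial>lborel"
  have K_integrable: "integrable \<nu> (?K x')" for x'
    using abs_gauss_conv_le[OF sd_pos measurable_survivor_weight abs_survivor_weight_le]
    by (intro \<nu>.integrable_const_bound[where B="1 / sd_min"]) auto
  have "killed_walk law dens (Suc n) a w x - killed_walk law dens (Suc n) a w (- x) =
      (\<integral>y. ?K x y - ?K (- x) y \<partial>\<nu>)"
    unfolding killed_walk_Suc_mixture using K_integrable by simp
  also have "\<dots> = (\<integral>y. (\<integral>u. gauss (sd y) (u - w) * D u \<partial>lborel) \<partial>\<nu>)"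
    using integrable_gauss_conv[OF sd_pos measurable_survivor_weight abs_survivor_weight_le]
    by (intro Bochner_Integration.integral_cong) (simp_all add: D_def right_diff_distrib)
  also have "\<dots> \<ge> 0"
    using Suc.prems
    by (intro integral_nonneg_AE AE_I2 gauss_conv_odd_nonneg[OF sd_pos D_measurable D_bound D_odd D_nonneg])
  finally show ?case
    by simp
qed

lemma killed_walk_dens_differentiable_in_start:
  "\<exists>g. (\<forall>w. ((\<lambda>v. killed_walk law dens n a v x) has_real_derivative g w) (at w))
       \<and> continuous_on UNIV g \<and> bounded (range g)"
proof (cases n)
  case 0
  have "((\<lambda>v. dens (x - v)) has_real_derivative - dens' (x - w)) (at w)" for w
  proof -
    have "((\<lambda>v. x - v) has_real_derivative - 1) (at w)"
      by (auto intro!: derivative_eq_intros)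
    from DERIV_chain2[OF has_real_derivative_dens this] show ?thesis
      by simp
  qed
  moreover have "continuous_on UNIV (\<lambda>w. - dens' (x - w))"
    by (intro continuous_intros continuous_on_compose2[OF continuous_on_dens']) auto
  moreover have "bounded (range (\<lambda>w. - dens' (x - w)))"
    unfolding bounded_real using abs_dens'_le by auto
  ultimately show ?thesis
    unfolding 0 killed_walk.simps by (intro exI[of _ "\<lambda>w. - dens' (x - w)"]) blast
next
  case (Suc m)
  interpret \<nu>: prob_space \<nu> by (rule prob_space_\<nu>)
  let ?C = "1 / sd_min\<^sup>2"
  define K where "K y w = (\<integral>u. gauss (sd y) (u - w) * survivor_weight m a x u \<partial>lborel)" for y w
  define K' where "K' y w = (\<integral>u. - gauss' (sd y) (u - w) * survivor_weight m a x u \<partial>lborel)" for y w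
  have K'_measurable: "(\<lambda>y. K' y t) \<in> borel_measurable \<nu>" for t
    unfolding K'_def by measurable
  have K'_bound: "\<bar>K' y t\<bar> \<le> ?C" for y t
  proof -
    have "\<bar>K' y t\<bar> \<le> 1 / sd_min / sd y"
      unfolding K'_def using abs_gauss'_conv_le[OF sd_pos measurable_survivor_weight abs_survivor_weight_le]
      by simp
    also have "\<dots> \<le> 1 / sd_min / sd_min"
      using sd_min_pos sd_min_le_sd[of y] by (intro divide_left_mono) auto
    finally show ?thesis
      by (simp add: power2_eq_square)
  qed
  have K_integrable: "integrable \<nu> (\<lambda>y. K y t)" for t
    unfolding K_def using abs_gauss_conv_le[OF sd_pos measurable_survivor_weight abs_survivor_weight_le]
    by (intro \<nu>.integrable_const_bound[where B="1 / sd_min"]) auto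
  have "((\<lambda>v. killed_walk law dens n a v x) has_real_derivative (\<integral>y. K' y w \<partial>\<nu>)) (at w)" for w
    unfolding Suc killed_walk_Suc_mixture K_def[symmetric]
  proof (rule has_real_derivative_integral[where r=1 and e="\<lambda>_. ?C"])
    show "(K y has_real_derivative K' y t) (at t)" for y t
      unfolding K_def[abs_def] K'_def
      by (rule has_real_derivative_gauss_conv[OF sd_pos measurable_survivor_weight abs_survivor_weight_le])
  qed (use K_integrable K'_bound K'_measurable in auto)
  moreover have "continuous_on UNIV (\<lambda>w. \<integral>y. K' y w \<partial>\<nu>)"
  proof (intro continuous_at_imp_continuous_on ballI isCont_integral[where r=1 and e="\<lambda>_. ?C"])
    show "isCont (K' y) w" for y w
      unfolding K'_def[abs_def]
      using isCont_gauss'_conv[OF sd_pos measurable_survivor_weight abs_survivor_weight_le]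
      by (simp add: continuous_intros)
  qed (use K'_bound K'_measurable in auto)
  moreover have "bounded (range (\<lambda>w. \<integral>y. K' y w \<partial>\<nu>))"
    unfolding bounded_real
    by (intro exI[of _ ?C]) (auto intro!: \<nu>.abs_integral_le_const K'_measurable K'_bound)
  ultimately show ?thesis
    by (intro exI[of _ "\<lambda>w. \<integral>y. K' y w \<partial>\<nu>"]) blast
qed

end

theorem mainTheorem15:
  fixes M :: "'a measure" and Y Z :: "nat \<Rightarrow> 'a \<Rightarrow> real" and \<epsilon> :: real
    and n :: nat and a :: "nat \<Rightarrow> real"
  assumes "prob_space M"
    and indep: "prob_space.indep_vars M (\<lambda>_. borel)
                  (\<lambda>i. case i of Inl k \<Rightarrow> Y k | Inr k \<Rightarrow> Z k) UNIV"
    and iid: "\<And>k. distr M borel (Y k) = distr M borel (Y 0)"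
    and normal: "\<And>k. distributed M lborel (Z k) (\<lambda>x. ennreal (std_normal_density x))"
    and eps: "\<epsilon> > 0" and Y_ge: "AE \<omega> in M. Y 0 \<omega> \<ge> \<epsilon>"
    and Y_int: "integrable M (Y 0)"
    and a_nonneg: "\<And>k. k \<in> {1..n} \<Longrightarrow> a k \<ge> 0"
  shows
    "(\<exists>f f' f''. distributed M lborel (WY Y Z 0) (\<lambda>x. ennreal (f x))
        \<and> (\<forall>x. (f has_real_derivative f' x) (at x))
        \<and> (\<forall>x. (f' has_real_derivative f'' x) (at x))
        \<and> continuous_on UNIV f'
        \<and> bounded (range f) \<and> bounded (range f') \<and> bounded (range f'')
        \<and> uniformly_continuous_on UNIV f \<and> uniformly_continuous_on UNIV f')
     \<and>
     (\<exists>fn :: real \<Rightarrow> real \<Rightarrow> real.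
        (\<forall>w x. (Fcdf M (WY Y Z) n a w has_real_derivative fn w x) (at x))
        \<and> (\<forall>w x. w \<ge> 0 \<longrightarrow> x \<ge> 0 \<longrightarrow> fn w x \<ge> fn w (- x))
        \<and> (\<forall>x. \<exists>g. (\<forall>w. ((\<lambda>v. fn v x) has_real_derivative g w) (at w))
                   \<and> continuous_on UNIV g \<and> bounded (range g)))"
proof -
  interpret random_time_increments M Y Z \<epsilon>
    using assms by (simp add: random_time_increments_def random_time_increments_axioms_def)
  show ?thesis
  proof (intro conjI exI[of _ "\<lambda>w x. killed_walk law dens n a w x"] allI impI WY_density_regular)
    show "(Fcdf M (WY Y Z) n a w has_real_derivative killed_walk law dens n a w x) (at x)" for w x
      by (rule has_real_derivative_Fcdf)
    show "killed_walk law dens n a w (- x) \<le> killed_walk law dens n a w x" if "0 \<le> w" "0 \<le> x" for w x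
      using that by (rule killed_walk_dens_reflect_le)
    show "\<exists>g. (\<forall>w. ((\<lambda>v. killed_walk law dens n a v x) has_real_derivative g w) (at w))
        \<and> continuous_on UNIV g \<and> bounded (range g)" for x
      by (rule killed_walk_dens_differentiable_in_start)
  qed
qed

end
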